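(* Let $G$ be a finitely generated group containing an element of infinite order. For every generating $n$-tuple $S\in\Gamma_n(G)$ and every $m\ge n+2$, the graph $\Gamma_m(G,S)$ has exponential growth.
   Context: For a group $G$, a generating $n$-tuple is $(g_1,\dots,g_n)\in G^n$ with $G=\langle g_1,\dots,g_n\rangle$. The product replacement graph $\Gamma_n(G)$ has vertices the generating $n$-tuples, with edges from $(g_1,\dots,g_n)$ to each tuple obtained by replacing $g_j$ by $g_jg_i^{\pm1}$ or $g_i^{\pm1}g_j$, for every ordered pair $i\neq j$. For $S=(g_1,\dots,g_n)$ and $m\ge n$, $\Gamma_m(G,S)$ is the connected component of $\Gamma_m(G)$ containing $(g_1,\dots,g_n,1,\dots,1)$ ($m-n$ identity entries). A connected graph has exponential growth if for some vertex $v$ there is $\alpha>1$ such that the number of vertices at distance at most $r$ from $v$ is at least $\alpha^r$ for all sufficiently large $r$. *)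

theory Defs
  imports "HOL-Algebra.Multiplicative_Group" "HOL-Algebra.Generated_Groups"
begin

definition fin_gen_group :: "('a, 'b) monoid_scheme \<Rightarrow> bool" where
  "fin_gen_group G \<longleftrightarrow> (\<exists>A. finite A \<and> A \<subseteq> carrier G \<and> generate G A = carrier G)"

definition gen_tuple :: "('a, 'b) monoid_scheme \<Rightarrow> nat \<Rightarrow> 'a list \<Rightarrow> bool" where
  "gen_tuple G n xs \<longleftrightarrow> length xs = n \<and> set xs \<subseteq> carrier G \<and> generate G (set xs) = carrier G"

definition pr_move :: "('a, 'b) monoid_scheme \<Rightarrow> 'a list \<Rightarrow> 'a list \<Rightarrow> bool" where
  "pr_move G xs ys \<longleftrightarrow> (\<exists>i j. i < length xs \<and> j < length xs \<and> i \<noteq> j \<and>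
     (ys = xs[j := xs ! j \<otimes>\<^bsub>G\<^esub> xs ! i] \<or>
      ys = xs[j := xs ! j \<otimes>\<^bsub>G\<^esub> inv\<^bsub>G\<^esub> (xs ! i)] \<or>
      ys = xs[j := xs ! i \<otimes>\<^bsub>G\<^esub> xs ! j] \<or>
      ys = xs[j := inv\<^bsub>G\<^esub> (xs ! i) \<otimes>\<^bsub>G\<^esub> xs ! j]))"

definition pr_edge :: "('a, 'b) monoid_scheme \<Rightarrow> nat \<Rightarrow> 'a list \<Rightarrow> 'a list \<Rightarrow> bool" where
  "pr_edge G n xs ys \<longleftrightarrow> gen_tuple G n xs \<and> gen_tuple G n ys \<and> pr_move G xs ys"

definition pr_component :: "('a, 'b) monoid_scheme \<Rightarrow> nat \<Rightarrow> 'a list \<Rightarrow> 'a list set" where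
  "pr_component G m S =
     {ys. (\<lambda>u v. pr_edge G m u v \<or> pr_edge G m v u)\<^sup>*\<^sup>* (S @ replicate (m - length S) \<one>\<^bsub>G\<^esub>) ys}"

definition graph_ball :: "'v set \<Rightarrow> ('v \<Rightarrow> 'v \<Rightarrow> bool) \<Rightarrow> 'v \<Rightarrow> nat \<Rightarrow> 'v set" where
  "graph_ball V E v r =
     {w. \<exists>k\<le>r. ((\<lambda>x y. x \<in> V \<and> y \<in> V \<and> (E x y \<or> E y x)) ^^ k) v w}"

definition exp_growth :: "'v set \<Rightarrow> ('v \<Rightarrow> 'v \<Rightarrow> bool) \<Rightarrow> bool" where
  "exp_growth V E \<longleftrightarrow> (\<exists>v\<in>V. \<exists>\<alpha>::real. \<alpha> > 1 \<and>
     (\<forall>\<^sub>F r in sequentially. \<alpha> ^ r \<le> real (card (graph_ball V E v r))))"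

end

theory Submission
  imports Defs
begin

text \<open>Since g has infinite order and m \<ge> n + 2, two spare coordinates of
  (g_1, ..., g_n, 1, ..., 1) can be turned into (g, g) using the generators, and then
  (g^a, g^c) can be replaced by (g^a, g^(a+c)) or (g^(a+c), g^c). Starting at (1, 1), the
  2^r binary words of length r lead along these two moves to 2^r distinct pairs (a, c)
  (the Euclidean algorithm reads the word back off the pair), so the ball of radius r
  about (g_1, ..., g_n, g, g, 1, ..., 1) has at least 2^r elements.\<close>

lemma finite_graph_ball:
  assumes "\<And>u. finite {w. E u w \<or> E w u}"
  shows "finite (graph_ball V E v r)"
proof -
  define R where "R = (\<lambda>x y. x \<in> V \<and> y \<in> V \<and> (E x y \<or> E y x))"
  have "finite {w. (R ^^ k) v w}" for k
  proof (induction k)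
    case (Suc k)
    have "{w. (R ^^ Suc k) v w} \<subseteq> (\<Union>u\<in>{w. (R ^^ k) v w}. {w. E u w \<or> E w u})"
      unfolding R_def by auto
    then show ?case by (rule finite_subset) (use Suc assms in auto)
  qed simp
  moreover have "graph_ball V E v r = (\<Union>k\<le>r. {w. (R ^^ k) v w})"
    unfolding graph_ball_def R_def by auto
  ultimately show ?thesis by auto
qed

lemma exp_growth_if_binary_tree:
  fixes f :: "bool list \<Rightarrow> 'v"
  assumes root: "f [] \<in> V"
    and step: "\<And>b w. f w \<in> V \<Longrightarrow> f (b # w) \<in> V \<and> E (f w) (f (b # w))"
    and inj: "\<And>w w'. length w = length w' \<Longrightarrow> f w = f w' \<Longrightarrow> w = w'"
    and finite_balls: "\<And>r. finite (graph_ball V E (f []) r)"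
  shows "exp_growth V E"
proof -
  define R where "R = (\<lambda>x y. x \<in> V \<and> y \<in> V \<and> (E x y \<or> E y x))"
  have walk: "(R ^^ length w) (f []) (f w) \<and> f w \<in> V" for w
  proof (induction w)
    case (Cons b w)
    then show ?case using step[of w b] by (auto simp: R_def intro: relpowp_Suc_I)
  qed (simp add: root)
  have "2 ^ r \<le> real (card (graph_ball V E (f []) r))" for r
  proof -
    let ?W = "{w. set w \<subseteq> (UNIV :: bool set) \<and> length w = r}"
    have "f ` ?W \<subseteq> graph_ball V E (f []) r"
      unfolding graph_ball_def R_def[symmetric] using walk by auto
    then have "card (f ` ?W) \<le> card (graph_ball V E (f []) r)"
      by (rule card_mono[OF finite_balls])
    moreover have "card (f ` ?W) = 2 ^ r"
      using card_image[of f ?W] card_lists_length_eq[of "UNIV :: bool set" r]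
      by (simp add: inj_on_def inj)
    ultimately show ?thesis by simp
  qed
  then show ?thesis
    unfolding exp_growth_def using root by (intro bexI[of _ "f []"] exI[of _ 2]) auto
qed

fun euclid_pair :: "bool list \<Rightarrow> int \<times> int" where
  "euclid_pair [] = (1, 1)"
| "euclid_pair (b # w) =
     (case euclid_pair w of (a, c) \<Rightarrow> if b then (a, a + c) else (a + c, c))"

lemma euclid_pair_pos: "euclid_pair w = (a, c) \<Longrightarrow> a \<ge> 1 \<and> c \<ge> 1"
  by (induction w arbitrary: a c) (auto split: prod.splits if_splits)

lemma euclid_pair_inj:
  "length w = length w' \<Longrightarrow> euclid_pair w = euclid_pair w' \<Longrightarrow> w = w'"
proof (induction w arbitrary: w')
  case (Cons b w)
  then obtain b' v where w': "w' = b' # v" by (cases w') auto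
  obtain a c where e: "euclid_pair w = (a, c)" by fastforce
  obtain a' c' where e': "euclid_pair v = (a', c')" by fastforce
  have "a \<ge> 1" "c \<ge> 1" "a' \<ge> 1" "c' \<ge> 1"
    using euclid_pair_pos[OF e] euclid_pair_pos[OF e'] by auto
  moreover have "(if b then (a, a + c) else (a + c, c)) = (if b' then (a', a' + c') else (a' + c', c'))"
    using Cons.prems(2) e e' w' by simp
  ultimately have "b = b'" "euclid_pair w = euclid_pair v"
    using e e' by (auto split: if_splits)
  then show ?case using Cons w' by auto
qed simp

lemma (in group) pr_move_sym:
  assumes "set xs \<subseteq> carrier G" "pr_move G xs ys"
  shows "pr_move G ys xs"
proof -
  from assms(2) obtain i j where ij: "i < length xs" "j < length xs" "i \<noteq> j" and
    c: "ys = xs[j := xs ! j \<otimes> xs ! i] \<or>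
      ys = xs[j := xs ! j \<otimes> inv (xs ! i)] \<or>
      ys = xs[j := xs ! i \<otimes> xs ! j] \<or>
      ys = xs[j := inv (xs ! i) \<otimes> xs ! j]" unfolding pr_move_def by blast
  have xi: "xs ! i \<in> carrier G" and xj: "xs ! j \<in> carrier G" using assms(1) ij by auto
  have len: "length ys = length xs" using c by auto
  have undo: "xs = ys[j := z]" if "z = xs ! j" for z
    using c ij that by (auto simp: list_update_overwrite)
  have "xs = ys[j := ys ! j \<otimes> inv (ys ! i)] \<or> xs = ys[j := ys ! j \<otimes> ys ! i] \<or>
        xs = ys[j := inv (ys ! i) \<otimes> ys ! j] \<or> xs = ys[j := ys ! i \<otimes> ys ! j]"
    using c
  proof (elim disjE)
    assume "ys = xs[j := xs ! j \<otimes> xs ! i]"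
    then show ?thesis using ij xi xj by (intro disjI1 undo) (simp add: m_assoc)
  next
    assume "ys = xs[j := xs ! j \<otimes> inv (xs ! i)]"
    then show ?thesis using ij xi xj by (intro disjI2 disjI1 undo) (simp add: m_assoc)
  next
    assume "ys = xs[j := xs ! i \<otimes> xs ! j]"
    then show ?thesis using ij xi xj by (intro disjI2 disjI1 undo) (simp add: m_assoc[symmetric])
  next
    assume "ys = xs[j := inv (xs ! i) \<otimes> xs ! j]"
    then show ?thesis using ij xi xj by (intro disjI2 undo) (simp add: m_assoc[symmetric])
  qed
  then show ?thesis unfolding pr_move_def using ij len by metis
qed

lemma finite_pr_move: "finite {ys. pr_move G xs ys}"
proof -
  have "{ys. pr_move G xs ys} \<subseteq> (\<Union>i<length xs. \<Union>j<length xs.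
     {xs[j := xs ! j \<otimes>\<^bsub>G\<^esub> xs ! i], xs[j := xs ! j \<otimes>\<^bsub>G\<^esub> inv\<^bsub>G\<^esub> (xs ! i)],
      xs[j := xs ! i \<otimes>\<^bsub>G\<^esub> xs ! j], xs[j := inv\<^bsub>G\<^esub> (xs ! i) \<otimes>\<^bsub>G\<^esub> xs ! j]})"
    unfolding pr_move_def by blast
  then show ?thesis by (rule finite_subset) auto
qed

lemma (in group) finite_pr_neighbours: "finite {w. pr_edge G m u w \<or> pr_edge G m w u}"
proof -
  have "{w. pr_edge G m u w \<or> pr_edge G m w u} \<subseteq> {w. pr_move G u w}"
    unfolding pr_edge_def gen_tuple_def using pr_move_sym by blast
  then show ?thesis using finite_pr_move finite_subset by blast
qed

lemma pr_component_closed: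
  assumes "u \<in> pr_component G m S" "(pr_edge G m)\<^sup>*\<^sup>* u w"
  shows "w \<in> pr_component G m S"
  using assms(2,1) unfolding pr_component_def
  by induction (auto intro: rtranclp.rtrancl_into_rtrancl)

definition extends_tuple :: "('a, 'b) monoid_scheme \<Rightarrow> 'a list \<Rightarrow> nat \<Rightarrow> 'a list \<Rightarrow> bool" where
  "extends_tuple G S m t \<longleftrightarrow> length t = m \<and> take (length S) t = S \<and> set t \<subseteq> carrier G"

lemma (in group) gen_tuple_if_extends:
  assumes "gen_tuple G n S" "extends_tuple G S m t"
  shows "gen_tuple G m t"
proof -
  have "set S \<subseteq> set t" using assms(2) set_take_subset unfolding extends_tuple_def by metis
  then have "generate G (set S) \<subseteq> generate G (set t)" by (rule mono_generate)
  moreover have "generate G (set t) \<subseteq> carrier G"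
    using assms(2) unfolding extends_tuple_def by (intro generate_incl) auto
  ultimately show ?thesis using assms unfolding gen_tuple_def extends_tuple_def by auto
qed

lemma (in group) pr_edge_if_extends:
  assumes "gen_tuple G n S" "extends_tuple G S m t" "extends_tuple G S m t'" "pr_move G t t'"
  shows "pr_edge G m t t'"
  using assms gen_tuple_if_extends unfolding pr_edge_def by blast

lemma extends_tuple_update:
  assumes "extends_tuple G S m t" "length S \<le> k" "x \<in> carrier G"
  shows "extends_tuple G S m (t[k := x])"
  using assms unfolding extends_tuple_def by (auto simp: set_update_subsetI)

lemma (in group) pr_edge_mult_free_entry:
  assumes S: "gen_tuple G n S" and t: "extends_tuple G S m t"
    and i: "i < n" and k: "n \<le> k" "k < m"
    and x: "x = t ! i \<or> x = inv (t ! i)"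
  shows "pr_edge G m t (t[k := t ! k \<otimes> x])"
proof (rule pr_edge_if_extends[OF S t])
  have "t ! k \<in> carrier G" "t ! i \<in> carrier G"
    using t i k S unfolding gen_tuple_def extends_tuple_def by auto
  then show "extends_tuple G S m (t[k := t ! k \<otimes> x])"
    using t k x S by (intro extends_tuple_update) (auto simp: gen_tuple_def)
  show "pr_move G t (t[k := t ! k \<otimes> x])"
    unfolding pr_move_def using t i k x S
    by (intro exI[of _ i] exI[of _ k]) (auto simp: gen_tuple_def extends_tuple_def)
qed

lemma (in group) pr_reach_mult_free_entry:
  assumes S: "gen_tuple G n S" and h: "h \<in> generate G (set S)"
    and t: "extends_tuple G S m t" and k: "n \<le> k" "k < m"
  shows "(pr_edge G m)\<^sup>*\<^sup>* t (t[k := t ! k \<otimes> h])"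
  using h t
proof (induction h arbitrary: t rule: generate.induct)
  case one
  then have "t ! k \<in> carrier G" using k unfolding extends_tuple_def by auto
  then show ?case by simp
next
  case (incl h)
  obtain i where "i < n" "t ! i = h"
    using incl S unfolding gen_tuple_def extends_tuple_def by (metis in_set_conv_nth nth_take)
  then show ?case using pr_edge_mult_free_entry[OF S incl.prems _ k] by blast
next
  case (inv h)
  obtain i where "i < n" "t ! i = h"
    using inv S unfolding gen_tuple_def extends_tuple_def by (metis in_set_conv_nth nth_take)
  then show ?case using pr_edge_mult_free_entry[OF S inv.prems _ k] by blast
next
  case (eng h1 h2)
  have carr: "h1 \<in> carrier G" "h2 \<in> carrier G" "t ! k \<in> carrier G"
    using eng.hyps generate_incl[of "set S"] S eng.prems k
    unfolding gen_tuple_def extends_tuple_def by auto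
  define t' where "t' = t[k := t ! k \<otimes> h1]"
  have t': "extends_tuple G S m t'"
    unfolding t'_def using eng.prems carr k S by (intro extends_tuple_update) (auto simp: gen_tuple_def)
  have "t'[k := t' ! k \<otimes> h2] = t[k := t ! k \<otimes> (h1 \<otimes> h2)]"
    unfolding t'_def using eng.prems carr k by (simp add: m_assoc extends_tuple_def)
  then show ?case using eng.IH(1)[OF eng.prems] eng.IH(2)[OF t'] unfolding t'_def by simp
qed

lemma (in group) pr_edges_adjacent_pair:
  assumes S: "gen_tuple G n S" and xy: "x \<in> carrier G" "y \<in> carrier G"
    and rest: "set rest \<subseteq> carrier G" "n + 2 + length rest = m"
  shows "pr_edge G m (S @ [x, y] @ rest) (S @ [x, y \<otimes> x] @ rest)"
    and "pr_edge G m (S @ [x, y] @ rest) (S @ [x \<otimes> y, y] @ rest)"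
proof -
  have len: "length S = n" and SG: "set S \<subseteq> carrier G" using S unfolding gen_tuple_def by auto
  have ext: "extends_tuple G S m (S @ [u, v] @ rest)" if "u \<in> carrier G" "v \<in> carrier G" for u v
    using that rest SG len unfolding extends_tuple_def by auto
  let ?t = "S @ [x, y] @ rest"
  have "S @ [x, y \<otimes> x] @ rest = ?t[Suc n := ?t ! Suc n \<otimes> ?t ! n]"
    using len by (simp add: nth_append list_update_append)
  then have mv1: "pr_move G ?t (S @ [x, y \<otimes> x] @ rest)"
    unfolding pr_move_def using len rest by (intro exI[of _ n] exI[of _ "Suc n"]) auto
  have "S @ [x \<otimes> y, y] @ rest = ?t[n := ?t ! n \<otimes> ?t ! Suc n]"
    using len by (simp add: nth_append list_update_append)
  then have mv2: "pr_move G ?t (S @ [x \<otimes> y, y] @ rest)"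
    unfolding pr_move_def using len rest by (intro exI[of _ "Suc n"] exI[of _ n]) auto
  show "pr_edge G m ?t (S @ [x, y \<otimes> x] @ rest)" "pr_edge G m ?t (S @ [x \<otimes> y, y] @ rest)"
    using mv1 mv2 ext xy S by (auto intro: pr_edge_if_extends)
qed

lemma (in group) pr_component_pair_mem:
  assumes S: "gen_tuple G n S" and g: "g \<in> carrier G" and mn: "m \<ge> n + 2"
  shows "S @ [g, g] @ replicate (m - n - 2) \<one> \<in> pr_component G m S"
proof -
  have len: "length S = n" and SG: "set S \<subseteq> carrier G" and gS: "g \<in> generate G (set S)"
    using S g unfolding gen_tuple_def by auto
  let ?rest = "replicate (m - n - 2) \<one>"
  have base: "S @ [\<one>, \<one>] @ ?rest \<in> pr_component G m S"
  proof -
    have "m - n = Suc (Suc (m - n - 2))" using mn by simp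
    then show ?thesis unfolding pr_component_def using len by (simp del: replicate_Suc) simp
  qed
  have ext: "extends_tuple G S m (S @ [u, v] @ ?rest)" if "u \<in> carrier G" "v \<in> carrier G" for u v
    using that mn SG len unfolding extends_tuple_def by auto
  have "(pr_edge G m)\<^sup>*\<^sup>* (S @ [\<one>, \<one>] @ ?rest) (S @ [g, \<one>] @ ?rest)"
    using pr_reach_mult_free_entry[OF S gS ext[of \<one> \<one>], of n] mn g len
    by (simp add: nth_append list_update_append)
  moreover have "(pr_edge G m)\<^sup>*\<^sup>* (S @ [g, \<one>] @ ?rest) (S @ [g, g] @ ?rest)"
    using pr_reach_mult_free_entry[OF S gS ext[of g \<one>], of "Suc n"] mn g len
    by (simp add: nth_append list_update_append)
  ultimately show ?thesis using base by (blast intro: pr_component_closed)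
qed

lemma (in group) exp_growth_pr_component:
  assumes g: "g \<in> carrier G" "ord g = 0"
    and S: "gen_tuple G n S" and mn: "m \<ge> n + 2"
  shows "exp_growth (pr_component G m S) (pr_edge G m)"
proof -
  define rest where "rest = replicate (m - n - 2) \<one>"
  define f where "f w = (case euclid_pair w of (a, c) \<Rightarrow> S @ [g [^] a, g [^] c] @ rest)" for w
  have rest: "set rest \<subseteq> carrier G" "n + 2 + length rest = m"
    using mn unfolding rest_def by auto
  show ?thesis
  proof (rule exp_growth_if_binary_tree[of f])
    show "f [] \<in> pr_component G m S"
      using pr_component_pair_mem[OF S g(1) mn] g unfolding f_def rest_def by simp
  next
    fix b w
    assume "f w \<in> pr_component G m S"
    moreover obtain a c where e: "euclid_pair w = (a, c)" by fastforce
    moreover have "g [^] (a + c) = g [^] c \<otimes> g [^] a" "g [^] (a + c) = g [^] a \<otimes> g [^] c"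
      using int_pow_mult[OF g(1), of a c] int_pow_mult[OF g(1), of c a] by (simp_all add: add.commute)
    ultimately show "f (b # w) \<in> pr_component G m S \<and> pr_edge G m (f w) (f (b # w))"
      using pr_edges_adjacent_pair[OF S _ _ rest, of "g [^] a" "g [^] c"] g
      unfolding f_def by (auto intro: pr_component_closed)
  next
    fix w w' :: "bool list"
    assume "length w = length w'" "f w = f w'"
    moreover have "g [^] a = g [^] a' \<longleftrightarrow> a = a'" for a a' :: int
      using int_pow_eq[OF g(1)] g(2) by auto
    ultimately show "w = w'"
      unfolding f_def using euclid_pair_inj by (auto split: prod.splits)
  next
    show "finite (graph_ball (pr_component G m S) (pr_edge G m) (f []) r)" for r
      by (rule finite_graph_ball[OF finite_pr_neighbours])
  qed
qed

theorem lemma3p8: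
  fixes G :: "('a, 'b) monoid_scheme" and S :: "'a list" and n m :: nat
  assumes "group G"
    and "fin_gen_group G"
    and "\<exists>g\<in>carrier G. group.ord G g = 0"
    and "gen_tuple G n S"
    and "m \<ge> n + 2"
  shows "exp_growth (pr_component G m S) (pr_edge G m)"
  using assms(3) group.exp_growth_pr_component[OF assms(1) _ _ assms(4,5)] by blast

end
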